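(* For every positive integer $n$ and every $u\in S_n$, \[ t^{\mathrm{des}(u)}q^{\mathrm{maj}(u)}\prod_{i=1}^n (1+tq^i) = \sum_{w \in B'(u)} t^{\mathrm{fdes}(w)}q^{\mathrm{fmaj}(w)}.\]
   Context: $S_n$ is the set of permutations of $[n]=\{1,\dots,n\}$, written as words $u=u_1\cdots u_n$. $B_n$ is the set of signed permutations: words $w=w_1\cdots w_n$ on the alphabet $\{\bar 1,1,\dots,\bar n,n\}$ (where $\bar i=-i$) such that $|w|:=|w_1|\cdots|w_n|$ is a permutation in $S_n$. The alphabet is totally ordered by $\bar 1<\bar 2<\cdots<\bar n<1<2<\cdots<n$. For a word $w$ over a totally ordered alphabet, $\mathrm{Des}(w)=\{i: w_i>w_{i+1}\}$, $\mathrm{des}(w)=|\mathrm{Des}(w)|$, and $\mathrm{maj}(w)=\sum_{i\in\mathrm{Des}(w)} i$. For $w\in B_n$: $\mathrm{fdes}(w)=2\,\mathrm{des}(w)+1$ if $w_1<0$ and $\mathrm{fdes}(w)=2\,\mathrm{des}(w)$ if $w_1>0$; $\mathrm{fmaj}(w)=2\,\mathrm{maj}(w)+|\{i:w_i<0\}|$. For $u\in S_n$, $B'(u)=\{w\in B_n: |w|=u\}$. *)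

theory Defs
  imports Main
begin

text \<open>Words are lists; positions are 1-indexed as in the paper, so position i
  refers to the list element w ! (i - 1).\<close>

definition Des :: "('a \<Rightarrow> 'a \<Rightarrow> bool) \<Rightarrow> 'a list \<Rightarrow> nat set" where
  "Des lt w = {i. 1 \<le> i \<and> i < length w \<and> lt (w ! i) (w ! (i - 1))}"

definition des :: "('a \<Rightarrow> 'a \<Rightarrow> bool) \<Rightarrow> 'a list \<Rightarrow> nat" where
  "des lt w = card (Des lt w)"

definition maj :: "('a \<Rightarrow> 'a \<Rightarrow> bool) \<Rightarrow> 'a list \<Rightarrow> nat" where
  "maj lt w = (\<Sum>i\<in>Des lt w. i)"

definition S :: "nat \<Rightarrow> nat list set" where
  "S n = {u. distinct u \<and> set u = {1..n}}"

text \<open>The total order bar1 < bar2 < ... < bar n < 1 < 2 < ... < n on signed letters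
  (a barred letter bar i is represented by the integer -i).\<close>
definition signed_less :: "int \<Rightarrow> int \<Rightarrow> bool" where
  "signed_less x y \<longleftrightarrow>
     (x < 0 \<and> 0 < y) \<or> (x < 0 \<and> y < 0 \<and> \<bar>x\<bar> < \<bar>y\<bar>) \<or> (0 < x \<and> 0 < y \<and> x < y)"

definition Bprime :: "nat list \<Rightarrow> int list set" where
  "Bprime u = {w. map (\<lambda>x. nat \<bar>x\<bar>) w = u}"

definition fdes :: "int list \<Rightarrow> nat" where
  "fdes w = 2 * des signed_less w + (if hd w < 0 then 1 else 0)"

definition fmaj :: "int list \<Rightarrow> nat" where
  "fmaj w = 2 * maj signed_less w + card {i. i < length w \<and> w ! i < 0}"

end

theory Submission
  imports Defs
begin

(* A signed word w in B'(u) is built letter by letter: appending the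
   letter a (with |a| > 0) to w in B'(u) gives w@[a] and w@[-a] in B'(u@[a]).
   How the flag statistics change depends only on the sign of the last letter of w
   and on whether a < last u, because in the signed order a negative letter is below
   every positive one and letters of equal sign compare like their absolute values.
   Hence we track two sums over B'(u): pos_sum (words ending in a positive letter)
   and neg_sum (words ending in a negative letter).  Appending a multiplies pos_sum
   by c + t q^n (n = |u|, c = t^2 q^2n if a < last u and 1 otherwise) and preserves
   the invariant neg_sum = t q^n pos_sum.  Since c + t q^n = c' (1 + t q^n) with
   c' = t q^n or 1 the factor by which t^des q^maj grows, induction gives
   pos_sum u = t^des(u) q^maj(u) prod_{i=1}^{n-1} (1 + t q^i), and the theorem follows by
   adding neg_sum. *)

lemma Des_snoc:
  "Des lt (w @ [x]) = Des lt w \<union> (if w \<noteq> [] \<and> lt x (last w) then {length w} else {})"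
proof (rule set_eqI)
  fix i
  show "i \<in> Des lt (w @ [x]) \<longleftrightarrow>
        i \<in> Des lt w \<union> (if w \<noteq> [] \<and> lt x (last w) then {length w} else {})"
  proof (cases "w = []")
    case True
    then show ?thesis by (auto simp: Des_def)
  next
    case False
    then have "last w = w ! (length w - 1)" by (simp add: last_conv_nth)
    with False show ?thesis
      by (cases "i < length w"; cases "i = length w") (auto simp: Des_def nth_append Suc_leI)
  qed
qed

lemma Des_single: "Des lt [x] = {}"
  by (auto simp: Des_def)

lemma finite_Des: "finite (Des lt w)"
  by (auto simp: Des_def intro: finite_subset[of _ "{..<length w}"])

lemma length_notin_Des: "length w \<notin> Des lt w"
  by (auto simp: Des_def)

lemma des_snoc:
  "des lt (w @ [x]) = des lt w + (if w \<noteq> [] \<and> lt x (last w) then 1 else 0)"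
  using finite_Des[of lt w] length_notin_Des[of w lt] by (simp add: des_def Des_snoc)

lemma maj_snoc:
  "maj lt (w @ [x]) = maj lt w + (if w \<noteq> [] \<and> lt x (last w) then length w else 0)"
  using finite_Des[of lt w] length_notin_Des[of w lt] by (simp add: maj_def Des_snoc)

lemma card_neg_snoc:
  "card {i. i < length (w @ [x]) \<and> (w @ [x]) ! i < 0} =
   card {i. i < length w \<and> w ! i < 0} + (if x < 0 then 1 else 0)"
proof -
  have "{i. i < length (w @ [x]) \<and> (w @ [x]) ! i < 0} =
        {i. i < length w \<and> w ! i < 0} \<union> (if x < 0 then {length w} else {})"
    by (auto simp: nth_append less_Suc_eq)
  then show ?thesis by auto
qed

definition flag_weight :: "'a::comm_ring_1 \<Rightarrow> 'a \<Rightarrow> int list \<Rightarrow> 'a" where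
  "flag_weight t q w = t ^ fdes w * q ^ fmaj w"

definition des_maj_weight :: "'a::comm_ring_1 \<Rightarrow> 'a \<Rightarrow> nat list \<Rightarrow> 'a" where
  "des_maj_weight t q u = t ^ des (<) u * q ^ maj (<) u"

lemma flag_weight_snoc:
  assumes "w \<noteq> []"
  shows "flag_weight t q (w @ [x]) =
           flag_weight t q w * (if signed_less x (last w) then t^2 * q^(2 * length w) else 1)
           * (if x < 0 then q else 1)"
proof -
  have fdes: "fdes (w @ [x]) = fdes w + (if signed_less x (last w) then 2 else 0)"
    using assms by (simp add: fdes_def des_snoc)
  have maj: "maj signed_less (w @ [x]) =
               maj signed_less w + (if signed_less x (last w) then length w else 0)"
    using assms by (simp add: maj_snoc)
  have fmaj: "fmaj (w @ [x]) = fmaj w + (if signed_less x (last w) then 2 * length w else 0)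
                + (if x < 0 then 1 else 0)"
    unfolding fmaj_def maj card_neg_snoc by simp
  show ?thesis
    unfolding flag_weight_def fdes fmaj by (simp add: power_add power_mult algebra_simps)
qed

lemma des_maj_weight_snoc:
  assumes "u \<noteq> []"
  shows "des_maj_weight t q (u @ [a]) =
           des_maj_weight t q u * (if a < last u then t * q ^ length u else 1)"
  using assms by (simp add: des_maj_weight_def des_snoc maj_snoc power_add algebra_simps)

lemma Bprime_Nil: "Bprime [] = {[]}"
  by (auto simp: Bprime_def)

lemma Bprime_snoc:
  "Bprime (u @ [a]) = (\<lambda>w. w @ [int a]) ` Bprime u \<union> (\<lambda>w. w @ [- int a]) ` Bprime u"
proof (rule set_eqI)
  fix v
  show "v \<in> Bprime (u @ [a]) \<longleftrightarrow>
        v \<in> (\<lambda>w. w @ [int a]) ` Bprime u \<union> (\<lambda>w. w @ [- int a]) ` Bprime u"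
  proof
    assume "v \<in> Bprime (u @ [a])"
    then obtain w x where "v = w @ [x]" "map (\<lambda>x. nat \<bar>x\<bar>) w = u" "nat \<bar>x\<bar> = a"
      by (auto simp: Bprime_def map_eq_append_conv)
    moreover from \<open>nat \<bar>x\<bar> = a\<close> have "x = int a \<or> x = - int a" by auto
    ultimately show "v \<in> (\<lambda>w. w @ [int a]) ` Bprime u \<union> (\<lambda>w. w @ [- int a]) ` Bprime u"
      by (auto simp: Bprime_def)
  qed (auto simp: Bprime_def)
qed

lemma finite_Bprime: "finite (Bprime u)"
  by (induction u rule: rev_induct) (auto simp: Bprime_Nil Bprime_snoc)

lemma sum_Bprime_snoc:
  assumes "a \<noteq> 0"
  shows "(\<Sum>w\<in>Bprime (u @ [a]). f w) =
           (\<Sum>w\<in>Bprime u. f (w @ [int a])) + (\<Sum>w\<in>Bprime u. f (w @ [- int a]))"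
proof -
  have "inj_on (\<lambda>w. w @ [int a]) (Bprime u)" "inj_on (\<lambda>w. w @ [- int a]) (Bprime u)"
    by (auto intro: inj_onI)
  moreover have "(\<lambda>w. w @ [int a]) ` Bprime u \<inter> (\<lambda>w. w @ [- int a]) ` Bprime u = {}"
    using assms by auto
  ultimately show ?thesis
    using finite_Bprime[of u] by (simp add: Bprime_snoc sum.union_disjoint sum.reindex)
qed

lemma length_Bprime: "w \<in> Bprime u \<Longrightarrow> length w = length u"
  by (auto simp: Bprime_def dest: arg_cong[of _ _ length])

lemma last_Bprime:
  assumes "w \<in> Bprime u" "u \<noteq> []" "0 \<notin> set u"
  shows "w \<noteq> []" "last w = int (last u) \<or> last w = - int (last u)" "last w \<noteq> 0"
proof -
  from assms(1,2) show "w \<noteq> []" by (auto simp: Bprime_def)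
  with assms(1) have abs_last: "nat \<bar>last w\<bar> = last u"
    by (auto simp: Bprime_def last_map)
  then show "last w = int (last u) \<or> last w = - int (last u)" by auto
  from assms(2,3) have "last u \<noteq> 0" by (metis last_in_set)
  with abs_last show "last w \<noteq> 0" by auto
qed

definition pos_sum :: "'a::comm_ring_1 \<Rightarrow> 'a \<Rightarrow> nat list \<Rightarrow> 'a" where
  "pos_sum t q u = (\<Sum>w\<in>Bprime u. if 0 < last w then flag_weight t q w else 0)"

definition neg_sum :: "'a::comm_ring_1 \<Rightarrow> 'a \<Rightarrow> nat list \<Rightarrow> 'a" where
  "neg_sum t q u = (\<Sum>w\<in>Bprime u. if last w < 0 then flag_weight t q w else 0)"

(* If 0 does not occur in u, every signed word over u ends in a nonzero letter. *)
lemma sum_flag_weight_split: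
  assumes "u \<noteq> []" "0 \<notin> set u"
  shows "(\<Sum>w\<in>Bprime u. flag_weight t q w) = pos_sum t q u + neg_sum t q u"
proof -
  have "flag_weight t q w = (if 0 < last w then flag_weight t q w else 0)
                          + (if last w < 0 then flag_weight t q w else 0)"
    if "w \<in> Bprime u" for w
    using last_Bprime(3)[OF that assms] by auto
  then show ?thesis
    by (simp add: pos_sum_def neg_sum_def sum.distrib[symmetric] cong: sum.cong)
qed

(* Appending a positive letter a: in the signed order the comparison with last w is
   a descent iff last w > 0 and a < last u (for +a), resp. iff last w > 0 or
   a < last u (for -a). *)
lemma sign_sums_snoc:
  fixes t q :: "'a::comm_ring_1"
  assumes "u \<noteq> []" "0 \<notin> set u" "0 < a"
  defines "X \<equiv> t^2 * q^(2 * length u)"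
  defines "c \<equiv> if a < last u then X else 1"
  shows "pos_sum t q (u @ [a]) = c * pos_sum t q u + neg_sum t q u"
    and "neg_sum t q (u @ [a]) = q * (X * pos_sum t q u + c * neg_sum t q u)"
proof -
  let ?pos = "\<lambda>w. if 0 < last w then flag_weight t q w else 0"
  let ?neg = "\<lambda>w. if last w < 0 then flag_weight t q w else 0"
  have append_pos: "flag_weight t q (w @ [int a]) = c * ?pos w + ?neg w"
   and append_neg: "flag_weight t q (w @ [- int a]) = q * (X * ?pos w + c * ?neg w)"
    if "w \<in> Bprime u" for w
    using last_Bprime[OF that assms(1,2)] length_Bprime[OF that] assms(3)
    by (auto simp: flag_weight_snoc signed_less_def X_def c_def)
  show "pos_sum t q (u @ [a]) = c * pos_sum t q u + neg_sum t q u"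
    using assms(3) append_pos
    by (simp add: pos_sum_def neg_sum_def sum_Bprime_snoc sum_distrib_left sum.distrib[symmetric]
        cong: sum.cong)
  show "neg_sum t q (u @ [a]) = q * (X * pos_sum t q u + c * neg_sum t q u)"
    using assms(3) append_neg
    by (simp add: pos_sum_def neg_sum_def sum_Bprime_snoc sum_distrib_left sum.distrib[symmetric]
        algebra_simps cong: sum.cong)
qed

lemma sign_sums_single:
  fixes t q :: "'a::comm_ring_1"
  assumes "0 < a"
  shows "pos_sum t q [a] = 1" and "neg_sum t q [a] = t * q"
proof -
  have Bprime_single: "Bprime [a] = {[int a], [- int a]}"
    using Bprime_snoc[of "[]" a] by (auto simp: Bprime_Nil)
  have "{i. i < length [x] \<and> [x] ! i < 0} = (if x < 0 then {0} else {})" for x :: int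
    by auto
  then have "flag_weight t q [int a] = 1" "flag_weight t q [- int a] = t * q"
    using assms by (simp_all add: flag_weight_def fdes_def fmaj_def des_def maj_def Des_single)
  with assms show "pos_sum t q [a] = 1" "neg_sum t q [a] = t * q"
    by (simp_all add: pos_sum_def neg_sum_def Bprime_single)
qed

lemma sign_sums_closed_form:
  fixes t q :: "'a::comm_ring_1"
  assumes "u \<noteq> []" "0 \<notin> set u"
  shows "pos_sum t q u = des_maj_weight t q u * (\<Prod>i = 1..length u - 1. 1 + t * q ^ i)
         \<and> neg_sum t q u = t * q ^ length u * pos_sum t q u"
  using assms
proof (induction u rule: rev_nonempty_induct)
  case (single a)
  then show ?case by (simp add: sign_sums_single des_maj_weight_def des_def maj_def Des_single)
next
  case (snoc a u)
  define n where "n = length u"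
  define X where "X = t^2 * q^(2 * n)"
  define c where "c = (if a < last u then X else 1)"
  define c' where "c' = (if a < last u then t * q ^ n else 1)"
  have a_pos: "0 < a" and u_no_zero: "0 \<notin> set u" using snoc.prems by auto
  obtain m where n_Suc: "n = Suc m" using snoc.hyps by (cases u) (auto simp: n_def)
  note IH = snoc.IH[OF u_no_zero, folded n_def]
  have growth: "c + t * q ^ n = c' * (1 + t * q ^ n)"
    by (simp add: c_def c'_def X_def power2_eq_square power_mult algebra_simps)
  have neg_IH: "neg_sum t q u = t * q ^ n * pos_sum t q u" using IH by blast
  have "pos_sum t q (u @ [a]) = c * pos_sum t q u + neg_sum t q u"
    using sign_sums_snoc(1)[OF snoc.hyps u_no_zero a_pos, where t = t and q = q] by (simp add: c_def X_def n_def)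
  then have pos_snoc: "pos_sum t q (u @ [a]) = (c + t * q ^ n) * pos_sum t q u"
    by (simp add: neg_IH algebra_simps)
  have "neg_sum t q (u @ [a]) = q * (X * pos_sum t q u + c * neg_sum t q u)"
    using sign_sums_snoc(2)[OF snoc.hyps u_no_zero a_pos, where t = t and q = q] by (simp add: c_def X_def n_def)
  also have "\<dots> = q * (X + c * (t * q ^ n)) * pos_sum t q u"
    by (simp add: neg_IH algebra_simps)
  also have "\<dots> = t * q ^ Suc n * ((c + t * q ^ n) * pos_sum t q u)"
    by (simp add: X_def power2_eq_square power_mult algebra_simps)
  finally have neg_snoc: "neg_sum t q (u @ [a]) = t * q ^ length (u @ [a]) * pos_sum t q (u @ [a])"
    by (simp add: pos_snoc n_def)
  have pos_IH: "pos_sum t q u = des_maj_weight t q u * (\<Prod>i = 1..m. 1 + t * q ^ i)"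
    using IH by (simp add: n_Suc)
  have "pos_sum t q (u @ [a]) =
          des_maj_weight t q u * c' * ((1 + t * q ^ n) * (\<Prod>i = 1..m. 1 + t * q ^ i))"
    unfolding pos_snoc growth pos_IH by (simp add: algebra_simps)
  also have "\<dots> = des_maj_weight t q (u @ [a]) * (\<Prod>i = 1..length (u @ [a]) - 1. 1 + t * q ^ i)"
    using des_maj_weight_snoc[OF snoc.hyps, of t q a]
    by (simp add: c'_def n_def[symmetric] n_Suc prod.nat_ivl_Suc')
  finally show ?case using neg_snoc by blast
qed

theorem theorem7:
  fixes n :: nat and u :: "nat list" and t q :: "'a :: comm_ring_1"
  assumes "0 < n" and "u \<in> S n"
  shows "t ^ des (<) u * q ^ maj (<) u * (\<Prod>i = 1..n. 1 + t * q ^ i)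
         = (\<Sum>w\<in>Bprime u. t ^ fdes w * q ^ fmaj w)"
proof -
  from assms(2) have "distinct u" "set u = {1..n}" by (auto simp: S_def)
  then have len: "length u = n" and no_zero: "0 \<notin> set u"
    using distinct_card[of u] by auto
  with assms(1) have nonempty: "u \<noteq> []" by auto
  from assms(1) obtain m where n_Suc: "n = Suc m" by (cases n) auto
  have "(\<Sum>w\<in>Bprime u. t ^ fdes w * q ^ fmaj w) = pos_sum t q u + neg_sum t q u"
    using sum_flag_weight_split[OF nonempty no_zero] by (simp add: flag_weight_def)
  also have "\<dots> = des_maj_weight t q u * ((1 + t * q ^ n) * (\<Prod>i = 1..m. 1 + t * q ^ i))"
    using sign_sums_closed_form[OF nonempty no_zero, of t q] by (simp add: len n_Suc algebra_simps)
  also have "\<dots> = t ^ des (<) u * q ^ maj (<) u * (\<Prod>i = 1..n. 1 + t * q ^ i)"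
    by (simp add: des_maj_weight_def n_Suc prod.nat_ivl_Suc')
  finally show ?thesis by simp
qed

end
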